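(* In the setting below, if $S_1,S_2\in\mathrm{Lin}(\mathcal{C}_1,\mathcal{C}_2)^\tau$, then there exists $R\ge 0$ such that $d_{\mathcal{C}_2}(S_1(x),S_2(x))\le R$ for all $x\in\mathcal{C}_1$.
   Context: Let $M_i=\Gamma_i\backslash\Omega_i$ ($i=1,2$) be compact proper convex real projective manifolds ($\Omega_i\subset\mathbb{P}(\mathbb{R}^{d_i+1})$ proper convex open, $\Gamma_i$ discrete acting properly discontinuously, freely, cocompactly). Let $\mathcal{C}_i$ be a component of the preimage of $\Omega_i$ in $\mathbb{R}^{d_i+1}\setminus\{0\}$ (a convex open cone containing no affine line), $\overline\Gamma_i=\{\gamma\in\mathrm{GL}_{d_i+1}(\mathbb{R}):|\det\gamma|=1,\gamma\mathcal{C}_i=\mathcal{C}_i,[\gamma]\in\Gamma_i\}$ and $\Lambda_i=\langle\overline\Gamma_i,e\,\mathrm{Id}\rangle$, a discrete group acting cocompactly on $\mathcal{C}_i$. Let $\tau:\Lambda_1\to\Lambda_2$ be a homomorphism. $\mathrm{Lin}(\mathcal{C}_1,\mathcal{C}_2)^\tau$ is the set of linear maps $S:\mathbb{R}^{d_1+1}\to\mathbb{R}^{d_2+1}$ with $S(\mathcal{C}_1)\subset\mathcal{C}_2$ and $S\circ\phi=\tau(\phi)\circ S$ for all $\phi\in\Lambda_1$. Viewing $\mathbb{R}^{d_2+1}$ as an affine chart of $\mathbb{P}(\mathbb{R}^{d_2+2})$, $\mathcal{C}_2$ is a proper convex open set and $d_{\mathcal{C}_2}$ is its Hilbert metric: $d(x,y)=\log\frac{|x-b||y-a|}{|x-a||y-b|}$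 where $a,b$ are the boundary points (possibly at infinity) on the line through $x,y$, ordered $a,x,y,b$. *)

theory Defs
  imports "HOL-Analysis.Analysis"
begin

text \<open>A projective transformation [g] is represented through the full preimage
  of the group Gamma in GL (a set of invertible matrices closed under
  nonzero scaling).  The proper convex set Omega is represented by the
  cone C (a component of its preimage).\<close>

definition proper_convex_cone :: "('a::euclidean_space) set \<Rightarrow> bool" where
  "proper_convex_cone C \<longleftrightarrow> open C \<and> convex C \<and> C \<noteq> {} \<and>
     (\<forall>x\<in>C. \<forall>t>0. t *\<^sub>R x \<in> C) \<and>
     \<not> (\<exists>p v. v \<noteq> 0 \<and> (\<forall>s::real. p + s *\<^sub>R v \<in> C))"

definition lifted_group ::
  "(real^'n) set \<Rightarrow> (real^'n^'n) set \<Rightarrow> (real^'n^'n) set" where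
  "lifted_group C G = {g. \<bar>det g\<bar> = 1 \<and> (\<lambda>x. g *v x) ` C = C \<and> g \<in> G}"

definition generated_matrix_group :: "(real^'n^'n) set \<Rightarrow> (real^'n^'n) set" where
  "generated_matrix_group S = \<Inter>{H. S \<subseteq> H \<and> mat 1 \<in> H \<and>
      (\<forall>a\<in>H. \<forall>b\<in>H. a ** b \<in> H) \<and> (\<forall>a\<in>H. invertible a \<and> matrix_inv a \<in> H)}"

definition Lambda_group :: "(real^'n) set \<Rightarrow> (real^'n^'n) set \<Rightarrow> (real^'n^'n) set" where
  "Lambda_group C G = generated_matrix_group (lifted_group C G \<union> {exp 1 *\<^sub>R mat 1})"

text \<open>C is a cone over a proper convex open set Omega in projective space and G
  is the preimage in GL of a discrete group Gamma of projective transformations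
  preserving Omega, acting properly discontinuously, freely and cocompactly on Omega.
  Via the unique lift of each element of Gamma to lifted_group C G, these
  conditions are expressed on the cone (points of Omega = open rays of C).\<close>
definition compact_convex_projective_manifold_data ::
  "(real^'n) set \<Rightarrow> (real^'n^'n) set \<Rightarrow> bool" where
  "compact_convex_projective_manifold_data C G \<longleftrightarrow>
     proper_convex_cone C \<and>
     \<comment> \<open>G is a subgroup of GL, full preimage of Gamma in GL\<close>
     mat 1 \<in> G \<and> (\<forall>a\<in>G. \<forall>b\<in>G. a ** b \<in> G) \<and>
     (\<forall>a\<in>G. invertible a \<and> matrix_inv a \<in> G) \<and>
     (\<forall>a\<in>G. \<forall>c::real. c \<noteq> 0 \<longrightarrow> c *\<^sub>R a \<in> G) \<and>
     \<comment> \<open>Gamma preserves Omega\<close>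
     (\<forall>g\<in>G. (\<lambda>x. g *v x) ` C = C \<or> (\<lambda>x. g *v x) ` C = uminus ` C) \<and>
     \<comment> \<open>Gamma is discrete\<close>
     (\<exists>e>0. \<forall>h\<in>G. \<bar>det h\<bar> = 1 \<and> norm (h - mat 1) < e \<longrightarrow> h = mat 1) \<and>
     \<comment> \<open>properly discontinuous action on Omega\<close>
     (\<forall>K. compact K \<and> K \<subseteq> C \<longrightarrow>
        finite {g\<in>lifted_group C G. \<exists>x\<in>K. \<exists>t>0. t *\<^sub>R (g *v x) \<in> K}) \<and>
     \<comment> \<open>free action on Omega\<close>
     (\<forall>g\<in>lifted_group C G. (\<exists>x\<in>C. \<exists>t>0. g *v x = t *\<^sub>R x) \<longrightarrow> g = mat 1) \<and>
     \<comment> \<open>cocompact action on Omega\<close>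
     (\<exists>K. compact K \<and> K \<subseteq> C \<and>
        (\<forall>x\<in>C. \<exists>g\<in>lifted_group C G. \<exists>t>0. t *\<^sub>R (g *v x) \<in> K))"

definition Lin_equiv ::
  "(real^'n) set \<Rightarrow> (real^'m) set \<Rightarrow> (real^'n^'n) set \<Rightarrow>
   (real^'n^'n \<Rightarrow> real^'m^'m) \<Rightarrow> (real^'n^'m) set" where
  "Lin_equiv C1 C2 L1 \<tau> = {S. (\<forall>x\<in>C1. S *v x \<in> C2) \<and> (\<forall>\<phi>\<in>L1. S ** \<phi> = \<tau> \<phi> ** S)}"

text \<open>Hilbert metric of a convex open set C (in an affine chart):
  log(|x-b||y-a| / (|x-a||y-b|)) with a, b the endpoints of the chord through x, y
  (order a, x, y, b); a ratio involving an endpoint at infinity equals 1.\<close>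
definition hilbert_dist :: "('a::euclidean_space) set \<Rightarrow> 'a \<Rightarrow> 'a \<Rightarrow> real" where
  "hilbert_dist C x y =
    (if x = y then 0 else
     (let I = {s::real. x + s *\<^sub>R (y - x) \<in> C};
          ra = (if bdd_below I then
                  (let a = x + Inf I *\<^sub>R (y - x) in dist y a / dist x a) else 1);
          rb = (if bdd_above I then
                  (let b = x + Sup I *\<^sub>R (y - x) in dist x b / dist y b) else 1)
      in ln (ra * rb)))"

end

theory Submission
  imports Defs
begin

text \<open>By equivariance, \<open>S\<^sub>i (t g x) = t \<tau>(g) S\<^sub>i x\<close>, and \<open>\<tau>(g)\<close> together with positive scaling
  are isometries of the Hilbert metric of \<open>C\<^sub>2\<close>. By cocompactness every \<open>x \<in> C\<^sub>1\<close> is moved this way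
  into a fixed compact set \<open>K \<subseteq> C\<^sub>1\<close>, so it suffices to bound the Hilbert distance on the compact
  set \<open>S\<^sub>1 K \<union> S\<^sub>2 K \<subseteq> C\<^sub>2\<close>; there it is controlled by the Euclidean diameter and the distance
  to the boundary.\<close>

definition chord_params :: "('a::euclidean_space) set \<Rightarrow> 'a \<Rightarrow> 'a \<Rightarrow> real set" where
  "chord_params C x y = {s. x + s *\<^sub>R (y - x) \<in> C}"

text \<open>The two factors of the cross ratio, with the chord endpoints given by their parameters
  \<open>Inf I < 0 < 1 < Sup I\<close>.\<close>

definition lower_chord_ratio :: "real set \<Rightarrow> real" where
  "lower_chord_ratio I = (if bdd_below I then \<bar>1 - Inf I\<bar> / \<bar>Inf I\<bar> else 1)"

definition upper_chord_ratio :: "real set \<Rightarrow> real" where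
  "upper_chord_ratio I = (if bdd_above I then \<bar>Sup I\<bar> / \<bar>Sup I - 1\<bar> else 1)"

lemma dist_start_point_line:
  fixes x y :: "'a::real_normed_vector"
  shows "dist x (x + t *\<^sub>R (y - x)) = \<bar>t\<bar> * dist x y"
  by (simp add: dist_norm norm_minus_commute)

lemma dist_end_point_line:
  fixes x y :: "'a::real_normed_vector"
  shows "dist y (x + t *\<^sub>R (y - x)) = \<bar>1 - t\<bar> * dist x y"
proof -
  have "y - (x + t *\<^sub>R (y - x)) = (1 - t) *\<^sub>R (y - x)" by (simp add: algebra_simps)
  thus ?thesis by (simp add: dist_norm norm_minus_commute)
qed

lemma hilbert_dist_chord:
  fixes x y :: "'a::euclidean_space"
  assumes "x \<noteq> y"
  shows "hilbert_dist C x y =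
    ln (lower_chord_ratio (chord_params C x y) * upper_chord_ratio (chord_params C x y))"
  using assms
  by (simp add: hilbert_dist_def lower_chord_ratio_def upper_chord_ratio_def chord_params_def
      Let_def dist_start_point_line dist_end_point_line abs_minus_commute[of "Sup _" 1])

lemma hilbert_dist_linear_image:
  fixes f :: "'a::euclidean_space \<Rightarrow> 'b::euclidean_space"
  assumes "linear f" and "inj f" and preserves: "\<And>z. f z \<in> C' \<longleftrightarrow> z \<in> C"
  shows "hilbert_dist C' (f x) (f y) = hilbert_dist C x y"
proof (cases "x = y")
  case True
  thus ?thesis by (simp add: hilbert_dist_def)
next
  case False
  with \<open>inj f\<close> have "f x \<noteq> f y" by (meson injD)
  have "f x + s *\<^sub>R (f y - f x) = f (x + s *\<^sub>R (y - x))" for s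
    using \<open>linear f\<close> by (simp add: linear_add linear_diff linear_scale)
  hence "chord_params C' (f x) (f y) = chord_params C x y"
    by (simp add: chord_params_def preserves)
  thus ?thesis using False \<open>f x \<noteq> f y\<close> by (simp add: hilbert_dist_chord)
qed

lemma hilbert_dist_scaleR:
  fixes C :: "'a::euclidean_space set"
  assumes cone: "\<forall>x\<in>C. \<forall>t>0. t *\<^sub>R x \<in> C" and "t > 0"
  shows "hilbert_dist C (t *\<^sub>R x) (t *\<^sub>R y) = hilbert_dist C x y"
proof (rule hilbert_dist_linear_image[OF linear_scaleR])
  show "inj (scaleR t :: 'a \<Rightarrow> 'a)" using \<open>t > 0\<close> by (auto intro: injI)
  fix z
  show "t *\<^sub>R z \<in> C \<longleftrightarrow> z \<in> C"
  proof
    assume "t *\<^sub>R z \<in> C"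
    moreover have "1 / t > 0" using \<open>t > 0\<close> by simp
    ultimately have "(1 / t) *\<^sub>R (t *\<^sub>R z) \<in> C" using cone by blast
    thus "z \<in> C" using \<open>t > 0\<close> by simp
  qed (use cone \<open>t > 0\<close> in simp)
qed

lemma lower_chord_ratio_bound:
  assumes "\<alpha> > 0" and "- \<alpha> \<in> I"
  shows "0 < lower_chord_ratio I \<and> lower_chord_ratio I \<le> 1 + 1 / \<alpha>"
proof (cases "bdd_below I")
  case True
  have "Inf I \<le> - \<alpha>" using cInf_lower[OF assms(2) True] .
  hence "- Inf I > 0" using \<open>\<alpha> > 0\<close> by simp
  hence "lower_chord_ratio I = 1 + 1 / (- Inf I)"
    using True by (simp add: lower_chord_ratio_def abs_of_neg field_simps)
  moreover have "1 / (- Inf I) \<le> 1 / \<alpha>"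
    using \<open>Inf I \<le> - \<alpha>\<close> \<open>\<alpha> > 0\<close> by (intro frac_le) auto
  ultimately show ?thesis using \<open>- Inf I > 0\<close> by simp
qed (use \<open>\<alpha> > 0\<close> in \<open>simp add: lower_chord_ratio_def\<close>)

lemma upper_chord_ratio_bound:
  assumes "\<alpha> > 0" and "1 + \<alpha> \<in> I"
  shows "0 < upper_chord_ratio I \<and> upper_chord_ratio I \<le> 1 + 1 / \<alpha>"
proof (cases "bdd_above I")
  case True
  have "1 + \<alpha> \<le> Sup I" using cSup_upper[OF assms(2) True] .
  hence "Sup I - 1 > 0" using \<open>\<alpha> > 0\<close> by simp
  hence "upper_chord_ratio I = 1 + 1 / (Sup I - 1)"
    using True by (simp add: upper_chord_ratio_def field_simps)
  moreover have "1 / (Sup I - 1) \<le> 1 / \<alpha>"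
    using \<open>1 + \<alpha> \<le> Sup I\<close> \<open>\<alpha> > 0\<close> by (intro frac_le) auto
  ultimately show ?thesis using \<open>Sup I - 1 > 0\<close> by (simp add: add_pos_pos)
qed (use \<open>\<alpha> > 0\<close> in \<open>simp add: upper_chord_ratio_def\<close>)

lemma hilbert_dist_le_of_cball_subset:
  fixes u v :: "'a::euclidean_space"
  assumes "\<delta> > 0" and "dist u v \<le> D"
    and "cball u \<delta> \<subseteq> C" and "cball v \<delta> \<subseteq> C"
  shows "hilbert_dist C u v \<le> 2 * ln (1 + D / \<delta>)"
proof (cases "u = v")
  case True
  thus ?thesis using assms(1,2) by (simp add: hilbert_dist_def)
next
  case False
  define \<alpha> where "\<alpha> = \<delta> / dist u v"
  define I where "I = chord_params C u v"
  have "\<alpha> > 0" using \<open>\<delta> > 0\<close> False by (simp add: \<alpha>_def)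
  have "1 / \<alpha> \<le> D / \<delta>" using \<open>\<delta> > 0\<close> assms(2) by (simp add: \<alpha>_def divide_right_mono)
  have "\<alpha> * dist u v = \<delta>" using False by (simp add: \<alpha>_def)
  hence "u + (- \<alpha>) *\<^sub>R (v - u) \<in> cball u \<delta>"
    and "u + (1 + \<alpha>) *\<^sub>R (v - u) \<in> cball v \<delta>"
    unfolding mem_cball dist_start_point_line dist_end_point_line using \<open>\<alpha> > 0\<close> by simp_all
  hence "- \<alpha> \<in> I" and "1 + \<alpha> \<in> I" using assms(3,4) by (auto simp: I_def chord_params_def)
  hence "0 < lower_chord_ratio I" "lower_chord_ratio I \<le> 1 + D / \<delta>"
    and "0 < upper_chord_ratio I" "upper_chord_ratio I \<le> 1 + D / \<delta>"
    using lower_chord_ratio_bound[OF \<open>\<alpha> > 0\<close>] upper_chord_ratio_bound[OF \<open>\<alpha> > 0\<close>]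
      \<open>1 / \<alpha> \<le> D / \<delta>\<close> by fastforce+
  hence "ln (lower_chord_ratio I * upper_chord_ratio I) \<le> ln ((1 + D / \<delta>) * (1 + D / \<delta>))"
    by (simp add: mult_mono)
  also have "\<dots> = 2 * ln (1 + D / \<delta>)"
    using \<open>0 < lower_chord_ratio I\<close> \<open>lower_chord_ratio I \<le> 1 + D / \<delta>\<close> by (simp add: ln_mult)
  finally show ?thesis using False by (simp add: hilbert_dist_chord I_def)
qed

lemma hilbert_dist_bounded_on_compact:
  fixes C L :: "'a::euclidean_space set"
  assumes "open C" and "compact L" and "L \<subseteq> C"
  obtains R where "R \<ge> 0" and "\<And>u v. u \<in> L \<Longrightarrow> v \<in> L \<Longrightarrow> hilbert_dist C u v \<le> R"
proof -
  obtain \<delta> where "\<delta> > 0" and \<delta>: "\<forall>x\<in>L. \<forall>y\<in>- C. \<delta> \<le> dist x y"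
    using separate_compact_closed[of L "- C"] assms by auto
  have balls: "cball u (\<delta> / 2) \<subseteq> C" if "u \<in> L" for u
    using \<delta> that \<open>\<delta> > 0\<close> by (force simp: subset_eq)
  obtain B where "B > 0" and B: "\<forall>x\<in>L. norm x \<le> B"
    using compact_imp_bounded[OF \<open>compact L\<close>] by (auto simp: bounded_pos)
  have diam: "dist u v \<le> 2 * B" if "u \<in> L" "v \<in> L" for u v
  proof -
    have "norm u \<le> B" "norm v \<le> B" using B that by auto
    thus ?thesis using norm_triangle_ineq4[of u v] by (simp add: dist_norm)
  qed
  show ?thesis
  proof
    show "0 \<le> 2 * ln (1 + 2 * B / (\<delta> / 2))" using \<open>B > 0\<close> \<open>\<delta> > 0\<close> by simp
    show "hilbert_dist C u v \<le> 2 * ln (1 + 2 * B / (\<delta> / 2))" if "u \<in> L" "v \<in> L" for u v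
      by (rule hilbert_dist_le_of_cball_subset) (use \<open>\<delta> > 0\<close> diam balls that in auto)
  qed
qed

definition cone_automorphisms :: "(real^'n) set \<Rightarrow> (real^'n^'n) set" where
  "cone_automorphisms C = {g. invertible g \<and> (\<lambda>x. g *v x) ` C = C}"

lemma matrix_inv_inverse:
  fixes A :: "real^'n^'n"
  assumes "invertible A"
  shows "A ** matrix_inv A = mat 1" and "matrix_inv A ** A = mat 1"
  using someI_ex[OF assms[unfolded invertible_def]] by (simp_all add: matrix_inv_def)

lemma invertible_matrix_inv:
  fixes A :: "real^'n^'n"
  shows "invertible A \<Longrightarrow> invertible (matrix_inv A)"
  using matrix_inv_inverse invertible_def by blast

lemma matrix_inv_image_eq:
  fixes a :: "real^'n^'n"
  assumes "invertible a" and "(\<lambda>x. a *v x) ` C = C"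
  shows "(\<lambda>x. matrix_inv a *v x) ` C = C"
proof -
  have "matrix_inv a *v (a *v x) = x" for x
    using matrix_inv_inverse(2)[OF assms(1)] by (simp add: matrix_vector_mul_assoc)
  hence "(\<lambda>x. matrix_inv a *v x) ` ((\<lambda>x. a *v x) ` C) = C" by (simp add: image_image)
  thus ?thesis using assms(2) by simp
qed

lemma cone_automorphisms_mult:
  assumes "a \<in> cone_automorphisms C" and "b \<in> cone_automorphisms C"
  shows "a ** b \<in> cone_automorphisms C"
proof -
  have "(\<lambda>x. (a ** b) *v x) ` C = (\<lambda>x. a *v x) ` ((\<lambda>x. b *v x) ` C)"
    by (simp add: image_image matrix_vector_mul_assoc)
  thus ?thesis using assms by (simp add: cone_automorphisms_def invertible_mult)
qed

lemma cone_automorphisms_matrix_inv: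
  "a \<in> cone_automorphisms C \<Longrightarrow> matrix_inv a \<in> cone_automorphisms C"
  by (simp add: cone_automorphisms_def invertible_matrix_inv matrix_inv_image_eq)

lemma scaleR_mat_1_in_cone_automorphisms:
  fixes C :: "(real^'n) set"
  assumes cone: "\<forall>x\<in>C. \<forall>t>0. t *\<^sub>R x \<in> C" and "c > 0"
  shows "c *\<^sub>R mat 1 \<in> cone_automorphisms C"
proof -
  have "invertible (c *\<^sub>R mat 1 :: real^'n^'n)"
    using \<open>c > 0\<close> by (simp add: invertible_def scalar_matrix_assoc[symmetric] matrix_mul_lid
        exI[of _ "(1 / c) *\<^sub>R mat 1"])
  moreover have "(\<lambda>x. (c *\<^sub>R mat 1 :: real^'n^'n) *v x) ` C = C"
  proof
    show "(\<lambda>x. (c *\<^sub>R mat 1 :: real^'n^'n) *v x) ` C \<subseteq> C"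
      using cone \<open>c > 0\<close> by (auto simp: scaleR_matrix_vector_assoc[symmetric])
    have "x = (c *\<^sub>R mat 1 :: real^'n^'n) *v ((1 / c) *\<^sub>R x) \<and> (1 / c) *\<^sub>R x \<in> C" if "x \<in> C" for x
      using cone that \<open>c > 0\<close> by (simp add: scaleR_matrix_vector_assoc[symmetric])
    thus "C \<subseteq> (\<lambda>x. (c *\<^sub>R mat 1 :: real^'n^'n) *v x) ` C" by blast
  qed
  ultimately show ?thesis by (simp add: cone_automorphisms_def)
qed

lemma generated_matrix_group_least:
  assumes "S \<subseteq> H" and "mat 1 \<in> H" and "\<forall>a\<in>H. \<forall>b\<in>H. a ** b \<in> H"
    and "\<forall>a\<in>H. invertible a \<and> matrix_inv a \<in> H"
  shows "generated_matrix_group S \<subseteq> H"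
  using assms unfolding generated_matrix_group_def by (intro Inter_lower) simp

lemma Lambda_group_subset_cone_automorphisms:
  assumes cone: "\<forall>x\<in>C. \<forall>t>0. t *\<^sub>R x \<in> C"
  shows "Lambda_group C G \<subseteq> cone_automorphisms C"
  unfolding Lambda_group_def
proof (rule generated_matrix_group_least)
  show "lifted_group C G \<union> {exp 1 *\<^sub>R mat 1} \<subseteq> cone_automorphisms C"
    using scaleR_mat_1_in_cone_automorphisms[OF cone, of "exp 1"]
    by (auto simp: lifted_group_def cone_automorphisms_def invertible_det_nz)
  show "mat 1 \<in> cone_automorphisms C" by (simp add: cone_automorphisms_def invertible_def)
  show "\<forall>a\<in>cone_automorphisms C. \<forall>b\<in>cone_automorphisms C. a ** b \<in> cone_automorphisms C"
    by (blast intro: cone_automorphisms_mult)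
  show "\<forall>a\<in>cone_automorphisms C. invertible a \<and> matrix_inv a \<in> cone_automorphisms C"
    using cone_automorphisms_matrix_inv by (auto simp: cone_automorphisms_def)
qed

lemma hilbert_dist_cone_automorphism:
  assumes "A \<in> cone_automorphisms C"
  shows "hilbert_dist C (A *v x) (A *v y) = hilbert_dist C x y"
proof (rule hilbert_dist_linear_image[OF matrix_vector_mul_linear])
  have "invertible A" and image: "(\<lambda>x. A *v x) ` C = C"
    using assms by (auto simp: cone_automorphisms_def)
  show inj: "inj ((*v) A)"
  proof (rule injI)
    fix z w assume "A *v z = A *v w"
    hence "matrix_inv A *v (A *v z) = matrix_inv A *v (A *v w)" by simp
    thus "z = w" using matrix_inv_inverse(2)[OF \<open>invertible A\<close>] by (simp add: matrix_vector_mul_assoc)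
  qed
  show "A *v z \<in> C \<longleftrightarrow> z \<in> C" for z
    using image inj by (metis image_iff injD)
qed

lemma lifted_group_subset_Lambda_group: "lifted_group C G \<subseteq> Lambda_group C G"
  unfolding Lambda_group_def generated_matrix_group_def by blast

lemma Lin_equiv_intertwines:
  assumes "S \<in> Lin_equiv C1 C2 L \<tau>" and "g \<in> L"
  shows "S *v (t *\<^sub>R (g *v x)) = t *\<^sub>R (\<tau> g *v (S *v x))"
proof -
  have "S ** g = \<tau> g ** S" using assms by (simp add: Lin_equiv_def)
  hence "S *v (g *v x) = \<tau> g *v (S *v x)" by (metis matrix_vector_mul_assoc)
  thus ?thesis by (simp add: linear_scale[OF matrix_vector_mul_linear])
qed

theorem lemma7p3:
  fixes C1 :: "(real^'n) set" and G1 :: "(real^'n^'n) set"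
    and C2 :: "(real^'m) set" and G2 :: "(real^'m^'m) set"
    and \<tau> :: "real^'n^'n \<Rightarrow> real^'m^'m"
    and S1 S2 :: "real^'n^'m"
  assumes M1: "compact_convex_projective_manifold_data C1 G1"
    and M2: "compact_convex_projective_manifold_data C2 G2"
    and tau_into: "\<forall>\<phi>\<in>Lambda_group C1 G1. \<tau> \<phi> \<in> Lambda_group C2 G2"
    and tau_hom: "\<forall>\<phi>\<in>Lambda_group C1 G1. \<forall>\<psi>\<in>Lambda_group C1 G1.
                    \<tau> (\<phi> ** \<psi>) = \<tau> \<phi> ** \<tau> \<psi>"
    and S1: "S1 \<in> Lin_equiv C1 C2 (Lambda_group C1 G1) \<tau>"
    and S2: "S2 \<in> Lin_equiv C1 C2 (Lambda_group C1 G1) \<tau>"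
  shows "\<exists>R\<ge>0. \<forall>x\<in>C1. hilbert_dist C2 (S1 *v x) (S2 *v x) \<le> R"
proof -
  have "open C2" and cone2: "\<forall>x\<in>C2. \<forall>t>0. t *\<^sub>R x \<in> C2"
    using M2 by (simp_all add: compact_convex_projective_manifold_data_def proper_convex_cone_def)
  obtain K where "compact K" "K \<subseteq> C1"
    and cocompact: "\<forall>x\<in>C1. \<exists>g\<in>lifted_group C1 G1. \<exists>t>0. t *\<^sub>R (g *v x) \<in> K"
    using M1 by (auto simp: compact_convex_projective_manifold_data_def)
  define L where "L = (\<lambda>x. S1 *v x) ` K \<union> (\<lambda>x. S2 *v x) ` K"
  have "compact L" unfolding L_def
    by (intro compact_Un compact_continuous_image matrix_vector_mult_linear_continuous_on \<open>compact K\<close>)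
  moreover have "L \<subseteq> C2" using \<open>K \<subseteq> C1\<close> S1 S2 by (auto simp: L_def Lin_equiv_def)
  ultimately obtain R where "R \<ge> 0" and R: "\<And>u v. u \<in> L \<Longrightarrow> v \<in> L \<Longrightarrow> hilbert_dist C2 u v \<le> R"
    using hilbert_dist_bounded_on_compact[OF \<open>open C2\<close>] by metis
  have "hilbert_dist C2 (S1 *v x) (S2 *v x) \<le> R" if "x \<in> C1" for x
  proof -
    obtain g t where g: "g \<in> lifted_group C1 G1" and "t > 0" and "t *\<^sub>R (g *v x) \<in> K"
      using cocompact \<open>x \<in> C1\<close> by blast
    hence gL: "g \<in> Lambda_group C1 G1" using lifted_group_subset_Lambda_group by blast
    hence "\<tau> g \<in> cone_automorphisms C2"
      using tau_into Lambda_group_subset_cone_automorphisms[OF cone2] by blast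
    hence "hilbert_dist C2 (S1 *v x) (S2 *v x)
        = hilbert_dist C2 (t *\<^sub>R (\<tau> g *v (S1 *v x))) (t *\<^sub>R (\<tau> g *v (S2 *v x)))"
      by (simp add: hilbert_dist_scaleR[OF cone2 \<open>t > 0\<close>] hilbert_dist_cone_automorphism)
    also have "\<dots> = hilbert_dist C2 (S1 *v (t *\<^sub>R (g *v x))) (S2 *v (t *\<^sub>R (g *v x)))"
      using Lin_equiv_intertwines[OF S1 gL] Lin_equiv_intertwines[OF S2 gL] by simp
    also have "\<dots> \<le> R" using R \<open>t *\<^sub>R (g *v x) \<in> K\<close> by (simp add: L_def)
    finally show ?thesis .
  qed
  thus ?thesis using \<open>R \<ge> 0\<close> by blast
qed

end
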